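(* Consider the closed-loop switching semilinear system $\Sigma_0=(X,\mathrm{PC},\phi)$ described in the context and suppose $\Sigma_0$ is USGES. Then for every $r>0$ there exist $\underline{c}_r,\overline{c}_r>0$ and a Lipschitz continuous functional $V_r:X\to\mathbb{R}_+$ such that $\underline{c}_r\|x\|\le V_r(x)\le\overline{c}_r\|x\|$ for all $x\in B_X(0,r)$, and $\overline{D}_qV_r(x)\le-\|x\|$ for all $x\in B_X(0,r)$ and $q\in\mathcal{Q}$.
   Context: $X,U$ are Banach spaces, $B_X(0,r)$ is the closed ball of radius $r$. $A$ is the infinitesimal generator of a $C_0$-group $(T_t)_{t\in\mathbb{R}}$ of bounded linear operators on $X$. $\mathcal{Q}$ is a nonempty set and for $q\in\mathcal{Q}$, $f_q:X\times U\to X$ is Lipschitz continuous with a Lipschitz constant $L_f>0$ independent of $q$ and $f_q(0,0)=0$. $K:X\to U$ is globally Lipschitz with $K(0)=0$. For $q\in\mathcal{Q}$ and $x_0\in X$, let $x(\cdot,x_0,q)$ be the unique continuous mild solution of $\dot x=Ax+f_q(x,K(x))$, i.e. $x(t,x_0,q)=T_tx_0+\int_0^tT_{t-s}f_q(x(s,x_0,q),K(x(s,x_0,q)))ds$, and set $T_q(t)x_0=x(t,x_0,q)$. $\mathrm{PC}$ is the set of piecewise constant $\sigma:\mathbb{R}_+\to\mathcal{Q}$; for $\sigma$ equal to $q_k$ on $[t_k,t_{k+1})$, $0=t_0<t_1<\cdots\to\infty$, define $\phi(t,x_0,\sigma)=T_{q_k}(t-t_k)T_{q_{k-1}}(t_k-t_{k-1})\cdots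 T_{q_0}(t_1)x_0$ for $t\in[t_k,t_{k+1})$. $\Sigma_0$ is USGES if for every $r>0$ there exist $M(r),\lambda(r)>0$ with $\|\phi(t,x,\sigma)\|\le M(r)e^{-\lambda(r)t}\|x\|$ for all $t\ge0$, $x\in B_X(0,r)$, $\sigma\in\mathrm{PC}$. For $q\in\mathcal{Q}$, $\overline{D}_qV(x)=\limsup_{h\downarrow0}\frac1h\big(V(T_q(h)x)-V(x)\big)$. *)

theory Defs
  imports "HOL-Analysis.Analysis"
begin

text \<open>Strongly continuous group of bounded linear operators on a Banach space.
  (Its generator A is determined by T and is not needed explicitly.)\<close>
definition C0_group :: "(real \<Rightarrow> 'x::banach \<Rightarrow> 'x) \<Rightarrow> bool" where
  "C0_group T \<longleftrightarrow>
     (\<forall>t. bounded_linear (T t)) \<and> T 0 = id \<and>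
     (\<forall>s t. T (s + t) = T s \<circ> T t) \<and>
     (\<forall>x. continuous_on UNIV (\<lambda>t. T t x))"

text \<open>sol q t x0 = x(t,x0,q) = T_q(t) x0 is a continuous mild solution of
  x' = A x + f_q(x, K x), x(0) = x0, for t >= 0.\<close>
definition is_mild_solution_map ::
  "(real \<Rightarrow> 'x::banach \<Rightarrow> 'x) \<Rightarrow> ('q \<Rightarrow> 'x \<times> 'u \<Rightarrow> 'x) \<Rightarrow> ('x \<Rightarrow> 'u)
     \<Rightarrow> ('q \<Rightarrow> real \<Rightarrow> 'x \<Rightarrow> 'x) \<Rightarrow> bool" where
  "is_mild_solution_map T f K sol \<longleftrightarrow>
     (\<forall>q x0. continuous_on {0..} (\<lambda>t. sol q t x0) \<and>
        (\<forall>t\<ge>0. sol q t x0 =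
           T t x0 + integral {0..t} (\<lambda>s. T (t - s) (f q (sol q s x0, K (sol q s x0))))))"

text \<open>Switching times 0 = t_0 < t_1 < ... \<rightarrow> \<infinity>.  A switching signal in PC is given
  by such times ts together with the modes qs k on [ts k, ts (k+1)).\<close>
definition switch_times :: "(nat \<Rightarrow> real) \<Rightarrow> bool" where
  "switch_times ts \<longleftrightarrow> ts 0 = 0 \<and> strict_mono ts \<and> filterlim ts at_top sequentially"

fun switch_state :: "('q \<Rightarrow> real \<Rightarrow> 'x \<Rightarrow> 'x) \<Rightarrow> (nat \<Rightarrow> real) \<Rightarrow> (nat \<Rightarrow> 'q)
    \<Rightarrow> 'x \<Rightarrow> nat \<Rightarrow> 'x" where
  "switch_state sol ts qs x 0 = x"
| "switch_state sol ts qs x (Suc k) =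
     sol (qs k) (ts (Suc k) - ts k) (switch_state sol ts qs x k)"

definition phi :: "('q \<Rightarrow> real \<Rightarrow> 'x \<Rightarrow> 'x) \<Rightarrow> (nat \<Rightarrow> real) \<Rightarrow> (nat \<Rightarrow> 'q)
    \<Rightarrow> real \<Rightarrow> 'x \<Rightarrow> 'x" where
  "phi sol ts qs t x =
     (let k = (THE k. ts k \<le> t \<and> t < ts (Suc k))
      in sol (qs k) (t - ts k) (switch_state sol ts qs x k))"

definition USGES :: "('q \<Rightarrow> real \<Rightarrow> 'x::real_normed_vector \<Rightarrow> 'x) \<Rightarrow> bool" where
  "USGES sol \<longleftrightarrow>
     (\<forall>r>0. \<exists>M>0. \<exists>lam>0. \<forall>ts qs x t.
        switch_times ts \<longrightarrow> x \<in> cball 0 r \<longrightarrow> t \<ge> 0 \<longrightarrow>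
        norm (phi sol ts qs t x) \<le> M * exp (- lam * t) * norm x)"

definition dini_upper :: "('q \<Rightarrow> real \<Rightarrow> 'x \<Rightarrow> 'x) \<Rightarrow> ('x \<Rightarrow> real) \<Rightarrow> 'q \<Rightarrow> 'x \<Rightarrow> ereal" where
  "dini_upper sol V q x = Limsup (at_right 0) (\<lambda>h. ereal ((V (sol q h x) - V x) / h))"

end

theory Submission
  imports Defs
begin

(* A Massera-type converse Lyapunov argument resting on two estimates of the switched flow.

   Lipschitz dependence: in the equivalent norm |x|_w = sup_{s >= 0} e^{-ws} |T_s x| the semigroup
   satisfies |T_t|_w <= e^{wt}, so Gronwall's inequality applied to the mild solution formula makes
   every T_q(t) Lipschitz in |.|_w with constant e^{gt}, g independent of q.  The exponents add up
   along a switching signal, hence phi(t,.,sigma) is M_T e^{gt}-Lipschitz, uniformly in sigma.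

   Lyapunov functional: with mu = lambda/2 put
     V(x) = (1/mu) sup { e^{mu t} |phi(t,x,sigma)| : sigma in PC, 0 <= t <= tau }.
   The finite horizon tau keeps V Lipschitz; choosing M e^{-mu tau} <= 1 makes the restriction
   t <= tau harmless on B(0,r), because for larger t USGES already gives e^{mu t} |phi| <= |x|.
   Prefixing mode q on [0,h) to a switching signal yields a switching signal, so
   V(T_q(h) x) <= e^{-mu h} V(x), i.e. D_q V(x) <= -mu V(x) <= -|x|. *)

section \<open>Uniform boundedness and Gronwall's inequality\<close>

lemma uniform_boundedness:
  fixes F :: "'i \<Rightarrow> 'a::banach \<Rightarrow> 'b::real_normed_vector"
  assumes lin: "\<And>i. bounded_linear (F i)"
    and pointwise: "\<And>x. \<exists>B. \<forall>i. norm (F i x) \<le> B"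
  shows "\<exists>B\<ge>0. \<forall>i x. norm (F i x) \<le> B * norm x"
proof -
  define E where "E n = {x. \<forall>i. norm (F i x) \<le> real n}" for n :: nat
  have closed_E: "closed (E n)" for n
  proof -
    have "E n = (\<Inter>i. {x. norm (F i x) \<le> real n})" unfolding E_def by auto
    moreover have "closed {x. norm (F i x) \<le> real n}" for i
      by (intro closed_Collect_le continuous_intros linear_continuous_on lin)
    ultimately show ?thesis by auto
  qed
  have covering: "\<Union>(range E) = UNIV"
  proof -
    have "x \<in> \<Union>(range E)" for x
    proof -
      obtain B where "\<forall>i. norm (F i x) \<le> B" using pointwise by blast
      moreover obtain n where "B \<le> real n" using real_arch_simple by blast
      ultimately have "x \<in> E n" unfolding E_def using order_trans by blast
      then show ?thesis by blast
    qed
    then show ?thesis by blast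
  qed
  have "\<exists>S\<in>range E. \<not> (closedin euclidean S \<and> euclidean interior_of S = {})"
  proof (rule ccontr)
    assume "\<not> ?thesis"
    then have "euclidean interior_of \<Union>(range E) = {}"
      by (intro Baire_category_alt) (auto simp: completely_metrizable_space_euclidean)
    then show False using covering by simp
  qed
  then obtain n where "interior (E n) \<noteq> {}" using closed_E by auto
  then obtain x0 d where d: "d > 0" "ball x0 d \<subseteq> E n"
    by (meson all_not_in_conv mem_interior)
  have small: "norm (F i y) \<le> 2 * real n" if "norm y < d" for i y
  proof -
    have "x0 + y \<in> E n" "x0 \<in> E n" using d that by (auto simp: dist_norm)
    then have "norm (F i (x0 + y)) \<le> real n" "norm (F i x0) \<le> real n" unfolding E_def by auto
    moreover have "F i y = F i (x0 + y) - F i x0" using lin[of i] by (simp add: linear_simps)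
    ultimately show ?thesis by (metis norm_triangle_ineq4 order_trans add_mono mult_2)
  qed
  show ?thesis
  proof (intro exI[of _ "4 * real n / d"] conjI allI)
    show "0 \<le> 4 * real n / d" using d by simp
    fix i x
    show "norm (F i x) \<le> 4 * real n / d * norm x"
    proof (cases "x = 0")
      case True then show ?thesis using lin[of i] by (simp add: linear_simps)
    next
      case False
      define c where "c = d / (2 * norm x)"
      have c: "c > 0" using False d by (simp add: c_def)
      have "norm (c *\<^sub>R x) < d" using False d by (simp add: c_def)
      then have "norm (F i (c *\<^sub>R x)) \<le> 2 * real n" by (rule small)
      then have "c * norm (F i x) \<le> 2 * real n" using lin[of i] c by (simp add: linear_simps)
      then have "norm (F i x) \<le> 2 * real n / c" using c by (simp add: field_simps)
      also have "\<dots> = 4 * real n / d * norm x" using False d by (simp add: c_def field_simps)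
      finally show ?thesis .
    qed
  qed
qed

lemma gronwall_integral:
  fixes v :: "real \<Rightarrow> real"
  assumes cont: "continuous_on {0..b} v" and C: "C \<ge> 0"
    and ineq: "\<And>s. s \<in> {0..b} \<Longrightarrow> v s \<le> a + C * integral {0..s} v"
    and t: "t \<in> {0..b}"
  shows "a + C * integral {0..t} v \<le> a * exp (C * t)"
proof -
  define g where "g s = a + C * integral {0..s} v" for s
  define h where "h s = g s * exp (- C * s)" for s
  have "(g has_real_derivative C * v s) (at s within {0..b})" if "s \<in> {0..b}" for s
    unfolding g_def using integral_has_real_derivative[OF cont that]
    by (auto intro!: derivative_eq_intros)
  then have dh: "(h has_real_derivative C * (v s - g s) * exp (- C * s)) (at s within {0..b})"
    if "s \<in> {0..b}" for s
    unfolding h_def using that by (auto intro!: derivative_eq_intros simp: algebra_simps)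
  have "h t \<le> h 0"
  proof (rule DERIV_nonpos_imp_decreasing_open[where f = h])
    show "0 \<le> t" using t by simp
    show "continuous_on {0..t} h"
      by (rule continuous_on_subset[OF DERIV_continuous_on[OF dh]]) (use t in auto)
    fix s assume s: "0 < s" "s < t"
    then have "at s within {0..b} = at s" using t by (intro at_within_Icc_at) auto
    moreover have "C * (v s - g s) * exp (- C * s) \<le> 0"
      using ineq[of s] s t C by (simp add: g_def mult_nonneg_nonpos mult_nonpos_nonneg)
    ultimately show "\<exists>y. DERIV h s :> y \<and> y \<le> 0" using dh[of s] s t by auto
  qed
  then have "g t * exp (- C * t) \<le> a" by (simp add: h_def g_def)
  then show ?thesis by (simp add: g_def exp_minus field_simps)
qed

section \<open>Growth bound of a \<open>C\<^sub>0\<close>-group\<close>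

lemma C0_group_bounded_linear: "C0_group T \<Longrightarrow> bounded_linear (T t)"
  unfolding C0_group_def by blast

lemma C0_group_0: "C0_group T \<Longrightarrow> T 0 x = x"
  unfolding C0_group_def by simp

lemma C0_group_add: "C0_group T \<Longrightarrow> T (s + t) x = T s (T t x)"
  unfolding C0_group_def by simp

lemma C0_group_continuous_orbit: "C0_group T \<Longrightarrow> continuous_on S (\<lambda>t. T t x)"
  unfolding C0_group_def by (meson continuous_on_subset subset_UNIV)

lemma C0_group_bounded_on_unit_interval:
  fixes T :: "real \<Rightarrow> 'x::banach \<Rightarrow> 'x"
  assumes T: "C0_group T"
  shows "\<exists>MT\<ge>1. \<forall>t x. 0 \<le> t \<longrightarrow> t \<le> 1 \<longrightarrow> norm (T t x) \<le> MT * norm x"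
proof -
  define F where "F t = T (max 0 (min 1 t))" for t
  have "\<exists>B. \<forall>t. norm (F t x) \<le> B" for x
  proof -
    have "compact ((\<lambda>t. T t x) ` {0..1})"
      by (intro compact_continuous_image C0_group_continuous_orbit T) auto
    then obtain B where "\<forall>y\<in>(\<lambda>t. T t x) ` {0..1}. norm y \<le> B"
      using compact_imp_bounded bounded_iff by metis
    then show ?thesis by (intro exI[of _ B]) (auto simp: F_def)
  qed
  moreover have "bounded_linear (F t)" for t
    unfolding F_def by (rule C0_group_bounded_linear[OF T])
  ultimately obtain B where B: "\<forall>t x. norm (F t x) \<le> B * norm x"
    using uniform_boundedness[of F] by blast
  show ?thesis
  proof (intro exI[of _ "max 1 B"] conjI allI impI)
    fix t :: real and x assume "0 \<le> t" "t \<le> 1"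
    then have "norm (T t x) \<le> B * norm x" using B by (metis F_def max.absorb2 min.absorb2)
    also have "\<dots> \<le> max 1 B * norm x" by (intro mult_right_mono) auto
    finally show "norm (T t x) \<le> max 1 B * norm x" .
  qed simp
qed

lemma C0_group_power_bound:
  fixes T :: "real \<Rightarrow> 'x::banach \<Rightarrow> 'x"
  assumes T: "C0_group T" and MT: "MT \<ge> 1"
    and unit: "\<And>t x. 0 \<le> t \<Longrightarrow> t \<le> 1 \<Longrightarrow> norm (T t x) \<le> MT * norm x"
  shows "0 \<le> t \<Longrightarrow> t \<le> real n + 1 \<Longrightarrow> norm (T t x) \<le> MT ^ (n + 1) * norm x"
proof (induction n arbitrary: t)
  case 0 then show ?case using unit by simp
next
  case (Suc n)
  show ?case
  proof (cases "t \<le> real n + 1")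
    case True
    then have "norm (T t x) \<le> MT ^ (n + 1) * norm x" using Suc by blast
    also have "\<dots> \<le> MT ^ (Suc n + 1) * norm x"
      by (intro mult_right_mono power_increasing) (use MT in auto)
    finally show ?thesis .
  next
    case False
    have "norm (T t x) = norm (T 1 (T (t - 1) x))" using C0_group_add[OF T, of 1 "t - 1"] by simp
    also have "\<dots> \<le> MT * norm (T (t - 1) x)" by (rule unit) auto
    also have "norm (T (t - 1) x) \<le> MT ^ (n + 1) * norm x" using Suc False by auto
    finally show ?thesis using MT by (simp add: mult_left_mono mult.assoc)
  qed
qed

lemma C0_group_exp_bound:
  fixes T :: "real \<Rightarrow> 'x::banach \<Rightarrow> 'x"
  assumes T: "C0_group T"
  shows "\<exists>MT\<ge>1. \<exists>w\<ge>0. \<forall>t x. 0 \<le> t \<longrightarrow> norm (T t x) \<le> MT * exp (w * t) * norm x"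
proof -
  obtain MT where MT: "MT \<ge> 1"
    and unit: "\<And>t x. 0 \<le> t \<Longrightarrow> t \<le> 1 \<Longrightarrow> norm (T t x) \<le> MT * norm x"
    using C0_group_bounded_on_unit_interval[OF T] by blast
  have "norm (T t x) \<le> MT * exp (ln MT * t) * norm x" if t: "0 \<le> t" for t x
  proof -
    define n where "n = nat \<lfloor>t\<rfloor>"
    have n: "real n \<le> t" "t \<le> real n + 1" using t unfolding n_def by linarith+
    have "norm (T t x) \<le> MT ^ (n + 1) * norm x"
      using C0_group_power_bound[OF T MT unit t n(2)] .
    also have "MT ^ (n + 1) = MT * exp (real n * ln MT)"
      using MT by (simp add: exp_of_nat_mult)
    also have "\<dots> \<le> MT * exp (ln MT * t)"
      using MT n by (intro mult_left_mono) (auto simp: mult.commute intro!: mult_right_mono)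
    finally show ?thesis by (simp add: mult_right_mono)
  qed
  then show ?thesis using MT by (intro exI[of _ MT] conjI exI[of _ "ln MT"]) auto
qed

section \<open>Lipschitz dependence of mild solutions\<close>

locale exp_bounded_C0_group =
  fixes T :: "real \<Rightarrow> 'x::banach \<Rightarrow> 'x" and MT w :: real
  assumes C0: "C0_group T" and MT: "MT \<ge> 1" and w: "w \<ge> 0"
    and growth: "\<And>t x. 0 \<le> t \<Longrightarrow> norm (T t x) \<le> MT * exp (w * t) * norm x"
begin

definition weighted_norm :: "'x \<Rightarrow> real" where
  "weighted_norm x = (SUP s\<in>{0..}. exp (- w * s) * norm (T s x))"

lemma weighted_orbit_le: "0 \<le> s \<Longrightarrow> exp (- w * s) * norm (T s x) \<le> MT * norm x"
proof -
  assume s: "0 \<le> s"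
  have "exp (- w * s) * norm (T s x) \<le> exp (- w * s) * (MT * exp (w * s) * norm x)"
    using growth[OF s] by (intro mult_left_mono) auto
  also have "\<dots> = MT * norm x" by (simp add: exp_minus field_simps)
  finally show ?thesis .
qed

lemma bdd_above_weighted_orbit: "bdd_above ((\<lambda>s. exp (- w * s) * norm (T s x)) ` {0..})"
  using weighted_orbit_le by (intro bdd_aboveI[of _ "MT * norm x"]) auto

lemma weighted_orbit_le_weighted_norm:
  "0 \<le> s \<Longrightarrow> exp (- w * s) * norm (T s x) \<le> weighted_norm x"
  unfolding weighted_norm_def by (rule cSUP_upper[OF _ bdd_above_weighted_orbit]) auto

lemma weighted_norm_least:
  "(\<And>s. 0 \<le> s \<Longrightarrow> exp (- w * s) * norm (T s x) \<le> B) \<Longrightarrow> weighted_norm x \<le> B"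
  unfolding weighted_norm_def by (rule cSUP_least) auto

lemma norm_le_weighted_norm: "norm x \<le> weighted_norm x"
  using weighted_orbit_le_weighted_norm[of 0 x] by (simp add: C0_group_0[OF C0])

lemma weighted_norm_le: "weighted_norm x \<le> MT * norm x"
  by (rule weighted_norm_least) (rule weighted_orbit_le)

lemma continuous_on_group_apply:
  assumes g: "continuous_on S g" and a: "continuous_on S a"
    and a_bounds: "\<And>s. s \<in> S \<Longrightarrow> 0 \<le> a s \<and> a s \<le> B"
  shows "continuous_on S (\<lambda>s. T (a s) (g s))"
  unfolding continuous_on_def
proof
  fix s0 assume s0: "s0 \<in> S"
  let ?F = "at s0 within S"
  have "((\<lambda>s. T (a s) (g s - g s0)) \<longlongrightarrow> 0) ?F"
  proof (rule Lim_null_comparison)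
    have "norm (T (a s) (g s - g s0)) \<le> MT * exp (w * B) * norm (g s - g s0)" if "s \<in> S" for s
    proof -
      have "norm (T (a s) (g s - g s0)) \<le> MT * exp (w * a s) * norm (g s - g s0)"
        using growth a_bounds that by blast
      also have "\<dots> \<le> MT * exp (w * B) * norm (g s - g s0)"
        using MT w a_bounds[OF that] by (intro mult_right_mono mult_left_mono) (auto intro: mult_left_mono)
      finally show ?thesis .
    qed
    then show "\<forall>\<^sub>F s in ?F. norm (T (a s) (g s - g s0)) \<le> MT * exp (w * B) * norm (g s - g s0)"
      by (auto simp: eventually_at_filter)
    have "((\<lambda>s. g s - g s0) \<longlongrightarrow> 0) ?F"
      by (subst LIM_zero_iff) (use g s0 in \<open>auto simp: continuous_on_def\<close>)
    then show "((\<lambda>s. MT * exp (w * B) * norm (g s - g s0)) \<longlongrightarrow> 0) ?F"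
      by (intro tendsto_mult_right_zero tendsto_norm_zero)
  qed
  moreover have "continuous_on S (\<lambda>s. T (a s) (g s0))"
    by (rule continuous_on_compose2[OF C0_group_continuous_orbit[OF C0, of UNIV] a]) auto
  then have "((\<lambda>s. T (a s) (g s0) - T (a s0) (g s0)) \<longlongrightarrow> 0) ?F"
    by (subst LIM_zero_iff) (use s0 in \<open>auto simp: continuous_on_def\<close>)
  ultimately have "((\<lambda>s. T (a s) (g s - g s0) + (T (a s) (g s0) - T (a s0) (g s0))) \<longlongrightarrow> 0) ?F"
    using tendsto_add by fastforce
  moreover have "T (a s) (g s - g s0) + (T (a s) (g s0) - T (a s0) (g s0))
      = T (a s) (g s) - T (a s0) (g s0)" for s
    using C0_group_bounded_linear[OF C0, of "a s"] by (simp add: linear_simps)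
  ultimately show "((\<lambda>s. T (a s) (g s)) \<longlongrightarrow> T (a s0) (g s0)) ?F"
    by (simp add: LIM_zero_iff)
qed

end

locale semilinear_system = exp_bounded_C0_group T MT w
  for T :: "real \<Rightarrow> 'x::banach \<Rightarrow> 'x" and MT w :: real +
  fixes f :: "'q \<Rightarrow> 'x \<times> 'u::banach \<Rightarrow> 'x" and K :: "'x \<Rightarrow> 'u"
    and sol :: "'q \<Rightarrow> real \<Rightarrow> 'x \<Rightarrow> 'x" and Lf LK :: real
  assumes f_lipschitz: "\<And>q. Lf-lipschitz_on UNIV (f q)"
    and K_lipschitz: "LK-lipschitz_on UNIV K"
    and mild: "is_mild_solution_map T f K sol"
begin

definition forcing :: "'q \<Rightarrow> 'x \<Rightarrow> real \<Rightarrow> 'x" where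
  "forcing q x s = f q (sol q s x, K (sol q s x))"

definition flow_rate :: real where
  "flow_rate = w + MT * Lf * (1 + LK)"

lemma flow_rate_nonneg: "flow_rate \<ge> 0"
  using w MT lipschitz_on_nonneg[OF f_lipschitz] lipschitz_on_nonneg[OF K_lipschitz]
  by (simp add: flow_rate_def)

lemma sol_continuous: "continuous_on {0..} (\<lambda>t. sol q t x)"
  using mild unfolding is_mild_solution_map_def by blast

lemma sol_mild:
  "0 \<le> t \<Longrightarrow> sol q t x = T t x + integral {0..t} (\<lambda>s. T (t - s) (forcing q x s))"
  using mild unfolding is_mild_solution_map_def forcing_def by blast

lemma sol_at_0: "sol q 0 x = x"
  using sol_mild[of 0 q x] by (simp add: C0_group_0[OF C0])

lemma forcing_continuous: "continuous_on {0..} (forcing q x)"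
proof -
  have "continuous_on UNIV K" "continuous_on UNIV (f q)"
    using K_lipschitz f_lipschitz lipschitz_on_continuous_on by blast+
  then show ?thesis unfolding forcing_def
    by (auto intro!: continuous_on_compose2[of UNIV "f q"] continuous_on_Pair sol_continuous
        continuous_on_compose2[of UNIV K])
qed

lemma forcing_lipschitz:
  "norm (forcing q x s - forcing q y s) \<le> Lf * (1 + LK) * norm (sol q s x - sol q s y)"
proof -
  let ?a = "sol q s x" and ?b = "sol q s y"
  have "norm ((?a, K ?a) - (?b, K ?b)) \<le> norm (?a - ?b) + norm (K ?a - K ?b)"
    using norm_Pair_le[of "?a - ?b" "K ?a - K ?b"] by simp
  also have "\<dots> \<le> (1 + LK) * norm (?a - ?b)"
    using lipschitz_on_normD[OF K_lipschitz] by (simp add: algebra_simps)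
  finally have "Lf * norm ((?a, K ?a) - (?b, K ?b)) \<le> Lf * ((1 + LK) * norm (?a - ?b))"
    using lipschitz_on_nonneg[OF f_lipschitz] by (rule mult_left_mono)
  moreover have "norm (forcing q x s - forcing q y s) \<le> Lf * norm ((?a, K ?a) - (?b, K ?b))"
    unfolding forcing_def using lipschitz_on_normD[OF f_lipschitz] by blast
  ultimately show ?thesis by (simp add: mult.assoc)
qed

lemma mild_integrand_integrable:
  "0 \<le> t \<Longrightarrow> (\<lambda>s. T (t - s) (forcing q x s)) integrable_on {0..t}"
  by (intro integrable_continuous_interval continuous_on_group_apply[where B = t])
    (auto intro!: continuous_intros continuous_on_subset[OF forcing_continuous])

lemma group_apply_sol_diff:
  assumes r: "0 \<le> r" and t: "0 \<le> t"
  shows "T r (sol q t x - sol q t y) = T (r + t) (x - y)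
    + integral {0..t} (\<lambda>s. T (r + (t - s)) (forcing q x s - forcing q y s))"
proof -
  let ?Ix = "\<lambda>s. T (t - s) (forcing q x s)" and ?Iy = "\<lambda>s. T (t - s) (forcing q y s)"
  have int: "?Ix integrable_on {0..t}" "?Iy integrable_on {0..t}"
    using mild_integrand_integrable[OF t] by auto
  have lin: "bounded_linear (T s)" for s by (rule C0_group_bounded_linear[OF C0])
  have "sol q t x - sol q t y = T t (x - y) + integral {0..t} (\<lambda>s. ?Ix s - ?Iy s)"
    using sol_mild[OF t, of q x] sol_mild[OF t, of q y] integral_diff[OF int] lin[of t]
    by (simp add: linear_simps)
  moreover have "T r (integral {0..t} (\<lambda>s. ?Ix s - ?Iy s))
      = integral {0..t} (\<lambda>s. T r (?Ix s - ?Iy s))"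
    using integral_linear[OF integrable_diff[OF int] lin] by (simp add: o_def)
  ultimately have "T r (sol q t x - sol q t y)
      = T (r + t) (x - y) + integral {0..t} (\<lambda>s. T r (?Ix s - ?Iy s))"
    using lin[of r] C0_group_add[OF C0, of r t] by (simp add: linear_simps)
  moreover have "T r (?Ix s - ?Iy s) = T (r + (t - s)) (forcing q x s - forcing q y s)" for s
    using C0_group_add[OF C0] lin[of "t - s"] by (simp add: linear_simps)
  ultimately show ?thesis by simp
qed

lemma weighted_sol_diff_bound:
  assumes r: "0 \<le> r" and t: "0 \<le> t"
  shows "exp (- w * r) * norm (T r (sol q t x - sol q t y))
    \<le> exp (w * t) * (weighted_norm (x - y)
        + MT * Lf * (1 + LK) * integral {0..t} (\<lambda>s. exp (- w * s) * norm (sol q s x - sol q s y)))"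
proof -
  let ?v = "\<lambda>s. exp (- w * s) * norm (sol q s x - sol q s y)"
  let ?C = "MT * Lf * (1 + LK) * exp (w * (r + t))"
  let ?I = "integral {0..t} (\<lambda>s. T (r + (t - s)) (forcing q x s - forcing q y s))"
  have "norm ?I \<le> integral {0..t} (\<lambda>s. ?C * ?v s)"
  proof (rule integral_norm_bound_integral)
    show "(\<lambda>s. T (r + (t - s)) (forcing q x s - forcing q y s)) integrable_on {0..t}"
      using r by (intro integrable_continuous_interval continuous_on_group_apply[where B = "r + t"])
        (auto intro!: continuous_intros continuous_on_subset[OF forcing_continuous])
    show "(\<lambda>s. ?C * ?v s) integrable_on {0..t}"
      by (intro integrable_continuous_interval continuous_intros continuous_on_subset[OF sol_continuous])
        auto
    fix s assume s: "s \<in> {0..t}"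
    have "norm (T (r + (t - s)) (forcing q x s - forcing q y s))
        \<le> MT * exp (w * (r + (t - s))) * norm (forcing q x s - forcing q y s)"
      using growth r s by auto
    also have "\<dots> \<le> MT * exp (w * (r + (t - s))) * (Lf * (1 + LK) * norm (sol q s x - sol q s y))"
      using forcing_lipschitz MT by (intro mult_left_mono) auto
    also have "\<dots> = ?C * ?v s"
      by (simp add: algebra_simps exp_diff exp_minus field_simps)
    finally show "norm (T (r + (t - s)) (forcing q x s - forcing q y s)) \<le> ?C * ?v s" .
  qed
  then have "norm (T r (sol q t x - sol q t y)) \<le> norm (T (r + t) (x - y)) + ?C * integral {0..t} ?v"
    using group_apply_sol_diff[OF r t, of q x y] norm_triangle_ineq[of "T (r + t) (x - y)" ?I]
    by simp
  then have "exp (- w * r) * norm (T r (sol q t x - sol q t y))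
      \<le> exp (- w * r) * norm (T (r + t) (x - y)) + exp (- w * r) * ?C * integral {0..t} ?v"
    by (auto dest: mult_left_mono[of _ _ "exp (- w * r)"] simp: distrib_left mult.assoc)
  also have "exp (- w * r) * norm (T (r + t) (x - y))
      = exp (w * t) * (exp (- w * (r + t)) * norm (T (r + t) (x - y)))"
    by (simp add: algebra_simps flip: exp_add)
  also have "exp (- w * r) * ?C = exp (w * t) * (MT * Lf * (1 + LK))"
    by (simp add: algebra_simps flip: exp_add)
  also have "exp (- w * (r + t)) * norm (T (r + t) (x - y)) \<le> weighted_norm (x - y)"
    using r t by (intro weighted_orbit_le_weighted_norm) auto
  finally show ?thesis by (simp add: algebra_simps)
qed

lemma sol_weighted_lipschitz:
  assumes t: "0 \<le> t"
  shows "weighted_norm (sol q t x - sol q t y) \<le> exp (flow_rate * t) * weighted_norm (x - y)"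
proof -
  let ?v = "\<lambda>s. exp (- w * s) * norm (sol q s x - sol q s y)"
  let ?a = "weighted_norm (x - y)" and ?C = "MT * Lf * (1 + LK)"
  have C: "?C \<ge> 0"
    using MT lipschitz_on_nonneg[OF f_lipschitz] lipschitz_on_nonneg[OF K_lipschitz] by simp
  have "?v s \<le> ?a + ?C * integral {0..s} ?v" if "s \<in> {0..t}" for s
    using weighted_sol_diff_bound[of 0 s q x y] that
    by (auto simp: C0_group_0[OF C0] exp_minus field_simps)
  then have gronwall: "?a + ?C * integral {0..t} ?v \<le> ?a * exp (?C * t)"
    using t by (intro gronwall_integral C continuous_intros continuous_on_subset[OF sol_continuous])
      auto
  have "weighted_norm (sol q t x - sol q t y) \<le> exp (w * t) * (?a * exp (?C * t))"
  proof (rule weighted_norm_least)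
    fix r :: real assume "0 \<le> r"
    then have "exp (- w * r) * norm (T r (sol q t x - sol q t y)) \<le> exp (w * t) * (?a + ?C * integral {0..t} ?v)"
      using weighted_sol_diff_bound t by blast
    also have "\<dots> \<le> exp (w * t) * (?a * exp (?C * t))" using gronwall by simp
    finally show "exp (- w * r) * norm (T r (sol q t x - sol q t y)) \<le> exp (w * t) * (?a * exp (?C * t))" .
  qed
  also have "exp (w * t) * (?a * exp (?C * t)) = exp (flow_rate * t) * ?a"
    by (simp add: flow_rate_def algebra_simps exp_add)
  finally show ?thesis .
qed

end

section \<open>Switching signals\<close>

lemma switch_times_mono: "switch_times ts \<Longrightarrow> i \<le> j \<Longrightarrow> ts i \<le> ts j"
  unfolding switch_times_def by (simp add: strict_mono_less_eq)

lemma switch_times_nonneg: "switch_times ts \<Longrightarrow> 0 \<le> ts k"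
  using switch_times_mono[of ts 0 k] unfolding switch_times_def by auto

lemma switch_times_of_nat: "switch_times real"
  unfolding switch_times_def by (auto simp: strict_mono_def filterlim_real_sequentially)

lemma switch_times_interval_unique:
  assumes ts: "switch_times ts" and t: "0 \<le> t"
  shows "\<exists>!k. ts k \<le> t \<and> t < ts (Suc k)"
proof -
  have "\<forall>\<^sub>F n in sequentially. t + 1 \<le> ts n"
    using ts unfolding switch_times_def filterlim_at_top by blast
  then obtain N where "t + 1 \<le> ts N" unfolding eventually_sequentially by blast
  then have "t < ts N" by simp
  define M where "M = (LEAST n. t < ts n)"
  have M: "t < ts M" unfolding M_def by (rule LeastI[of _ N]) fact
  have "M \<noteq> 0" using M t ts by (cases M) (auto simp: switch_times_def)
  moreover have "ts (M - 1) \<le> t"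
  proof (rule ccontr)
    assume "\<not> ts (M - 1) \<le> t"
    then have "M \<le> M - 1" unfolding M_def by (intro Least_le) simp
    then show False using \<open>M \<noteq> 0\<close> by simp
  qed
  ultimately have k: "ts (M - 1) \<le> t \<and> t < ts (Suc (M - 1))" using M by simp
  show ?thesis
  proof (rule ex1I[where P = "\<lambda>k. ts k \<le> t \<and> t < ts (Suc k)", OF k])
    fix k assume k': "ts k \<le> t \<and> t < ts (Suc k)"
    show "k = M - 1"
    proof (rule ccontr)
      assume "k \<noteq> M - 1"
      then consider "Suc k \<le> M - 1" | "Suc (M - 1) \<le> k" by linarith
      then show False
      proof cases
        case 1 then show False using switch_times_mono[OF ts 1] k k' by linarith
      next
        case 2 then show False using switch_times_mono[OF ts 2] k k' by linarith
      qed
    qed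
  qed
qed

lemma phi_on_interval:
  assumes ts: "switch_times ts" and k: "ts k \<le> t" "t < ts (Suc k)"
  shows "phi sol ts qs t x = sol (qs k) (t - ts k) (switch_state sol ts qs x k)"
proof -
  have "0 \<le> t" using switch_times_nonneg[OF ts, of k] k by linarith
  then have "(THE k. ts k \<le> t \<and> t < ts (Suc k)) = k"
    using switch_times_interval_unique[OF ts] k by (intro the1_equality) auto
  then show ?thesis unfolding phi_def Let_def by simp
qed

lemma phi_time_0:
  assumes ts: "switch_times ts"
  shows "phi sol ts qs 0 x = sol (qs 0) 0 x"
proof -
  have "ts 0 = 0" "ts 0 < ts (Suc 0)"
    using ts unfolding switch_times_def strict_mono_def by blast+
  then show ?thesis using phi_on_interval[OF ts, of 0 0 sol qs x] by simp
qed

(* Mode q on [0, h), followed by the signal (ts, qs) delayed by h. *)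

definition prefix_times :: "real \<Rightarrow> (nat \<Rightarrow> real) \<Rightarrow> nat \<Rightarrow> real" where
  "prefix_times h ts k = (case k of 0 \<Rightarrow> 0 | Suc j \<Rightarrow> h + ts j)"

definition prefix_modes :: "'q \<Rightarrow> (nat \<Rightarrow> 'q) \<Rightarrow> nat \<Rightarrow> 'q" where
  "prefix_modes q qs k = (case k of 0 \<Rightarrow> q | Suc j \<Rightarrow> qs j)"

lemma switch_times_prefix:
  assumes ts: "switch_times ts" and h: "0 < h"
  shows "switch_times (prefix_times h ts)"
proof -
  have mono: "strict_mono (prefix_times h ts)"
  proof (rule strict_monoI_Suc)
    fix n show "prefix_times h ts n < prefix_times h ts (Suc n)"
      using ts h switch_times_nonneg[OF ts] unfolding switch_times_def strict_mono_def
      by (cases n) (auto simp: prefix_times_def add_pos_nonneg)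
  qed
  have "filterlim (\<lambda>k. h + ts k) at_top sequentially"
    using ts unfolding switch_times_def by (intro filterlim_tendsto_add_at_top[OF tendsto_const]) auto
  then have "filterlim (\<lambda>k. prefix_times h ts (Suc k)) at_top sequentially"
    by (simp add: prefix_times_def)
  then have "filterlim (prefix_times h ts) at_top sequentially"
    by (simp add: filterlim_sequentially_Suc)
  with mono show ?thesis unfolding switch_times_def by (simp add: prefix_times_def)
qed

lemma switch_state_prefix:
  "ts 0 = 0 \<Longrightarrow> switch_state sol (prefix_times h ts) (prefix_modes q qs) x (Suc k)
    = switch_state sol ts qs (sol q h x) k"
  by (induction k) (auto simp: prefix_times_def prefix_modes_def)

lemma phi_prefix:
  assumes ts: "switch_times ts" and h: "0 < h" and t: "0 \<le> t"
  shows "phi sol (prefix_times h ts) (prefix_modes q qs) (t + h) x = phi sol ts qs t (sol q h x)"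
proof -
  obtain k where k: "ts k \<le> t" "t < ts (Suc k)"
    using switch_times_interval_unique[OF ts t] by blast
  have "phi sol (prefix_times h ts) (prefix_modes q qs) (t + h) x
      = sol (prefix_modes q qs (Suc k)) (t + h - prefix_times h ts (Suc k))
          (switch_state sol (prefix_times h ts) (prefix_modes q qs) x (Suc k))"
    by (rule phi_on_interval[OF switch_times_prefix[OF ts h]]) (use k in \<open>auto simp: prefix_times_def\<close>)
  also have "\<dots> = sol (qs k) (t - ts k) (switch_state sol ts qs (sol q h x) k)"
    using ts unfolding switch_times_def
    by (simp only: switch_state_prefix) (simp add: prefix_modes_def prefix_times_def)
  also have "\<dots> = phi sol ts qs t (sol q h x)"
    by (rule phi_on_interval[OF ts k, symmetric])
  finally show ?thesis .
qed

context semilinear_system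
begin

lemma switch_state_weighted_lipschitz:
  assumes ts: "switch_times ts"
  shows "weighted_norm (switch_state sol ts qs x k - switch_state sol ts qs y k)
     \<le> exp (flow_rate * ts k) * weighted_norm (x - y)"
proof (induction k)
  case 0 then show ?case using ts by (simp add: switch_times_def)
next
  case (Suc k)
  have "0 \<le> ts (Suc k) - ts k" using switch_times_mono[OF ts, of k "Suc k"] by simp
  then have "weighted_norm (switch_state sol ts qs x (Suc k) - switch_state sol ts qs y (Suc k))
     \<le> exp (flow_rate * (ts (Suc k) - ts k))
       * weighted_norm (switch_state sol ts qs x k - switch_state sol ts qs y k)"
    by (simp add: sol_weighted_lipschitz)
  also have "\<dots> \<le> exp (flow_rate * (ts (Suc k) - ts k)) * (exp (flow_rate * ts k) * weighted_norm (x - y))"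
    by (intro mult_left_mono Suc) auto
  also have "\<dots> = exp (flow_rate * ts (Suc k)) * weighted_norm (x - y)"
    by (simp add: algebra_simps flip: exp_add)
  finally show ?case .
qed

lemma phi_lipschitz:
  assumes ts: "switch_times ts" and t: "0 \<le> t"
  shows "norm (phi sol ts qs t x - phi sol ts qs t y) \<le> MT * exp (flow_rate * t) * norm (x - y)"
proof -
  obtain k where k: "ts k \<le> t" "t < ts (Suc k)"
    using switch_times_interval_unique[OF ts t] by blast
  let ?xk = "switch_state sol ts qs x k" and ?yk = "switch_state sol ts qs y k"
  have "norm (phi sol ts qs t x - phi sol ts qs t y)
     \<le> weighted_norm (sol (qs k) (t - ts k) ?xk - sol (qs k) (t - ts k) ?yk)"
    using norm_le_weighted_norm phi_on_interval[OF ts k] by metis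
  also have "\<dots> \<le> exp (flow_rate * (t - ts k)) * weighted_norm (?xk - ?yk)"
    using k by (intro sol_weighted_lipschitz) auto
  also have "\<dots> \<le> exp (flow_rate * (t - ts k)) * (exp (flow_rate * ts k) * weighted_norm (x - y))"
    by (intro mult_left_mono switch_state_weighted_lipschitz ts) auto
  also have "\<dots> = exp (flow_rate * t) * weighted_norm (x - y)"
    by (simp add: algebra_simps flip: exp_add)
  also have "\<dots> \<le> exp (flow_rate * t) * (MT * norm (x - y))"
    by (intro mult_left_mono weighted_norm_le) auto
  finally show ?thesis by (simp add: algebra_simps)
qed

end

section \<open>A Lyapunov functional from exponential stability\<close>

lemma lipschitz_on_SUP:
  fixes F :: "'i \<Rightarrow> 'a::metric_space \<Rightarrow> real"
  assumes A: "A \<noteq> {}" and lip: "\<And>i. i \<in> A \<Longrightarrow> L-lipschitz_on S (F i)"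
    and bdd: "\<And>x. x \<in> S \<Longrightarrow> bdd_above ((\<lambda>i. F i x) ` A)"
  shows "L-lipschitz_on S (\<lambda>x. SUP i\<in>A. F i x)"
proof (rule lipschitz_onI)
  have SUP_le: "(SUP i\<in>A. F i x) \<le> (SUP i\<in>A. F i y) + L * dist x y" if "x \<in> S" "y \<in> S" for x y
  proof (rule cSUP_least[OF A])
    fix i assume i: "i \<in> A"
    have "F i x \<le> F i y + L * dist x y"
      using lipschitz_onD[OF lip[OF i] that] by (simp add: dist_real_def)
    also have "F i y \<le> (SUP i\<in>A. F i y)" by (rule cSUP_upper[OF i bdd[OF that(2)]])
    finally show "F i x \<le> (SUP i\<in>A. F i y) + L * dist x y" by simp
  qed
  fix x y assume "x \<in> S" "y \<in> S"
  then show "dist (SUP i\<in>A. F i x) (SUP i\<in>A. F i y) \<le> L * dist x y"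
    using SUP_le[of x y] SUP_le[of y x] by (simp add: dist_real_def dist_commute abs_le_iff)
next
  show "0 \<le> L" using A lip lipschitz_on_nonneg by blast
qed

lemma dini_upper_le_of_exp_decrease:
  fixes V :: "'x \<Rightarrow> real"
  assumes decrease: "\<forall>\<^sub>F h in at_right 0. V (sol q h x) \<le> exp (- mu * h) * V x"
  shows "dini_upper sol V q x \<le> ereal (- mu * V x)"
proof -
  have "\<forall>\<^sub>F h in at_right 0. ereal ((V (sol q h x) - V x) / h) \<le> ereal ((exp (- mu * h) - 1) / h * V x)"
    using decrease eventually_at_right_less[of 0]
  proof eventually_elim
    case (elim h)
    then have "V (sol q h x) - V x \<le> (exp (- mu * h) - 1) * V x" by (simp add: algebra_simps)
    then show ?case using elim by (simp add: divide_right_mono)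
  qed
  then have "dini_upper sol V q x \<le> Limsup (at_right 0) (\<lambda>h. ereal ((exp (- mu * h) - 1) / h * V x))"
    unfolding dini_upper_def by (rule Limsup_mono)
  also have "\<dots> = ereal (- mu * V x)"
  proof (rule lim_imp_Limsup[OF trivial_limit_at_right_real])
    have "((\<lambda>h. (exp (- mu * (0 + h)) - exp (- mu * 0)) / h) \<longlongrightarrow> - mu) (at 0)"
      by (rule DERIV_D) (auto intro!: derivative_eq_intros)
    then have "((\<lambda>h. (exp (- mu * h) - 1) / h) \<longlongrightarrow> - mu) (at_right 0)"
      using filterlim_at_split by force
    then show "((\<lambda>h. ereal ((exp (- mu * h) - 1) / h * V x)) \<longlongrightarrow> ereal (- mu * V x)) (at_right 0)"
      by (intro tendsto_intros)
  qed
  finally show ?thesis .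
qed

locale switched_flow_bounds =
  fixes sol :: "'q \<Rightarrow> real \<Rightarrow> 'x::real_normed_vector \<Rightarrow> 'x" and C g r M lam :: real
  assumes flow_at_0: "\<And>q x. sol q 0 x = x"
    and flow_lipschitz: "\<And>ts qs t x y. switch_times ts \<Longrightarrow> 0 \<le> t \<Longrightarrow>
      norm (phi sol ts qs t x - phi sol ts qs t y) \<le> C * exp (g * t) * norm (x - y)"
    and flow_decay: "\<And>ts qs t x. switch_times ts \<Longrightarrow> x \<in> cball 0 r \<Longrightarrow> 0 \<le> t \<Longrightarrow>
      norm (phi sol ts qs t x) \<le> M * exp (- lam * t) * norm x"
    and C: "C \<ge> 0" and g: "g \<ge> 0" and r: "r \<ge> 0" and M: "M > 0" and lam: "lam > 0"
begin

definition mu :: real where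
  "mu = lam / 2"

definition horizon :: real where
  "horizon = (\<bar>ln M\<bar> + 1) / mu"

definition trajectories :: "((nat \<Rightarrow> real) \<times> (nat \<Rightarrow> 'q) \<times> real) set" where
  "trajectories = {(ts, qs, t). switch_times ts \<and> 0 \<le> t \<and> t \<le> horizon}"

definition orbit_weight :: "(nat \<Rightarrow> real) \<times> (nat \<Rightarrow> 'q) \<times> real \<Rightarrow> 'x \<Rightarrow> real" where
  "orbit_weight p x = (case p of (ts, qs, t) \<Rightarrow> exp (mu * t) * norm (phi sol ts qs t x))"

definition orbit_sup :: "'x \<Rightarrow> real" where
  "orbit_sup x = (SUP p\<in>trajectories. orbit_weight p x)"

definition weight_lipschitz_const :: real where
  "weight_lipschitz_const = exp (mu * horizon) * C * exp (g * horizon)"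

lemma mu_pos: "mu > 0"
  using lam by (simp add: mu_def)

lemma decay_beyond_horizon:
  assumes "horizon \<le> t" shows "M * exp (- mu * t) \<le> 1"
proof -
  have "ln M \<le> mu * horizon" using mu_pos by (simp add: horizon_def)
  also have "\<dots> \<le> mu * t" using assms mu_pos by simp
  finally have "M \<le> exp (mu * t)" using M by (metis exp_ln exp_le_cancel_iff)
  then show ?thesis by (simp add: exp_minus field_simps)
qed

lemma phi_zero_state: "switch_times ts \<Longrightarrow> 0 \<le> t \<Longrightarrow> phi sol ts qs t 0 = 0"
  using flow_decay[of ts 0 t qs] r by simp

lemma orbit_weight_lipschitz:
  assumes p: "p \<in> trajectories"
  shows "weight_lipschitz_const-lipschitz_on UNIV (orbit_weight p)"
proof -
  obtain ts qs t where p_def: "p = (ts, qs, t)" and ts: "switch_times ts" and t: "0 \<le> t" "t \<le> horizon"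
    using p by (auto simp: trajectories_def)
  show ?thesis
  proof (rule lipschitz_onI)
    fix x y :: 'x
    have "dist (orbit_weight p x) (orbit_weight p y)
        = exp (mu * t) * \<bar>norm (phi sol ts qs t x) - norm (phi sol ts qs t y)\<bar>"
      by (simp add: orbit_weight_def p_def dist_real_def abs_mult flip: right_diff_distrib)
    also have "\<dots> \<le> exp (mu * t) * (C * exp (g * t) * norm (x - y))"
      by (intro mult_left_mono order_trans[OF norm_triangle_ineq3 flow_lipschitz[OF ts t(1)]]) auto
    also have "\<dots> \<le> weight_lipschitz_const * dist x y"
      unfolding weight_lipschitz_const_def dist_norm using t mu_pos g C
      by (simp add: mult.assoc, intro mult_mono mult_left_mono) (auto intro!: mult_mono)
    finally show "dist (orbit_weight p x) (orbit_weight p y) \<le> weight_lipschitz_const * dist x y" .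
  qed (use C in \<open>simp add: weight_lipschitz_const_def\<close>)
qed

lemma orbit_weight_le: "p \<in> trajectories \<Longrightarrow> orbit_weight p x \<le> weight_lipschitz_const * norm x"
  using lipschitz_onD[OF orbit_weight_lipschitz, of p x 0] phi_zero_state
  by (auto simp: trajectories_def orbit_weight_def dist_real_def)

lemma trivial_trajectory:
  "(real, qs, 0) \<in> trajectories" "orbit_weight (real, qs, 0) x = norm x"
  using switch_times_of_nat mu_pos M
  by (auto simp: trajectories_def horizon_def orbit_weight_def phi_time_0 flow_at_0)

lemma orbit_weight_le_orbit_sup: "p \<in> trajectories \<Longrightarrow> orbit_weight p x \<le> orbit_sup x"
  unfolding orbit_sup_def using orbit_weight_le
  by (intro cSUP_upper bdd_aboveI[of _ "weight_lipschitz_const * norm x"]) auto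

lemma norm_le_orbit_sup: "norm x \<le> orbit_sup x"
  using orbit_weight_le_orbit_sup trivial_trajectory by metis

lemma orbit_sup_lipschitz: "weight_lipschitz_const-lipschitz_on UNIV orbit_sup"
  unfolding orbit_sup_def using trivial_trajectory orbit_weight_le
  by (intro lipschitz_on_SUP orbit_weight_lipschitz bdd_aboveI[of _ "weight_lipschitz_const * norm _"])
    auto

lemma weighted_phi_le_orbit_sup:
  assumes ts: "switch_times ts" and t: "0 \<le> t" and x: "x \<in> cball 0 r"
  shows "exp (mu * t) * norm (phi sol ts qs t x) \<le> orbit_sup x"
proof (cases "t \<le> horizon")
  case True
  then show ?thesis
    using orbit_weight_le_orbit_sup[of "(ts, qs, t)"] ts t by (simp add: trajectories_def orbit_weight_def)
next
  case False
  have "exp (mu * t) * norm (phi sol ts qs t x) \<le> exp (mu * t) * (M * exp (- lam * t) * norm x)"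
    using flow_decay[OF ts x t] by (intro mult_left_mono) auto
  also have "\<dots> = M * exp (- mu * t) * norm x"
    by (simp add: mu_def algebra_simps flip: exp_add)
  also have "\<dots> \<le> norm x"
    using decay_beyond_horizon[of t] False M by (intro mult_left_le_one_le) auto
  finally show ?thesis using norm_le_orbit_sup order_trans by blast
qed

lemma orbit_sup_le_on_ball: "x \<in> cball 0 r \<Longrightarrow> orbit_sup x \<le> M * norm x"
  unfolding orbit_sup_def
proof (rule cSUP_least)
  show "trajectories \<noteq> {}" using trivial_trajectory by blast
  fix p assume x: "x \<in> cball 0 r" and p: "p \<in> trajectories"
  then obtain ts qs t where p_def: "p = (ts, qs, t)" and ts: "switch_times ts" and t: "0 \<le> t"
    by (auto simp: trajectories_def)
  have "orbit_weight p x \<le> exp (mu * t) * (M * exp (- lam * t) * norm x)"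
    unfolding orbit_weight_def p_def using flow_decay[OF ts x t] by (simp add: mult_left_mono)
  also have "\<dots> = M * exp (- mu * t) * norm x"
    by (simp add: mu_def algebra_simps flip: exp_add)
  also have "\<dots> \<le> M * norm x"
    using M mu_pos t by (simp add: mult_left_le_one_le)
  finally show "orbit_weight p x \<le> M * norm x" .
qed

lemma orbit_sup_decrease:
  assumes x: "x \<in> cball 0 r" and h: "0 < h"
  shows "orbit_sup (sol q h x) \<le> exp (- mu * h) * orbit_sup x"
  unfolding orbit_sup_def
proof (rule cSUP_least)
  show "trajectories \<noteq> {}" using trivial_trajectory by blast
  fix p assume "p \<in> trajectories"
  then obtain ts qs t where p_def: "p = (ts, qs, t)" and ts: "switch_times ts" and t: "0 \<le> t"
    by (auto simp: trajectories_def)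
  have "orbit_weight p (sol q h x)
      = exp (mu * t) * norm (phi sol (prefix_times h ts) (prefix_modes q qs) (t + h) x)"
    by (simp add: orbit_weight_def p_def phi_prefix[OF ts h t])
  also have "\<dots> = exp (- mu * h)
      * (exp (mu * (t + h)) * norm (phi sol (prefix_times h ts) (prefix_modes q qs) (t + h) x))"
    by (simp add: algebra_simps flip: exp_add)
  also have "\<dots> \<le> exp (- mu * h) * orbit_sup x"
    using t h by (intro mult_left_mono weighted_phi_le_orbit_sup switch_times_prefix ts x) auto
  finally show "orbit_weight p (sol q h x) \<le> exp (- mu * h) * (SUP p\<in>trajectories. orbit_weight p x)"
    by (simp add: orbit_sup_def)
qed

theorem converse_lyapunov:
  "\<exists>cl>0. \<exists>cu>0. \<exists>V :: 'x \<Rightarrow> real.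
     (\<exists>L. L-lipschitz_on UNIV V) \<and> (\<forall>x. V x \<ge> 0) \<and>
     (\<forall>x\<in>cball 0 r. cl * norm x \<le> V x \<and> V x \<le> cu * norm x) \<and>
     (\<forall>x\<in>cball 0 r. \<forall>q. dini_upper sol V q x \<le> ereal (- norm x))"
proof (intro exI conjI ballI allI)
  let ?V = "\<lambda>x. orbit_sup x / mu"
  show "(1 / mu * weight_lipschitz_const)-lipschitz_on UNIV ?V"
    using lipschitz_on_cmult_real_nonneg[OF orbit_sup_lipschitz, of "1 / mu"] mu_pos by simp
  show "?V x \<ge> 0" for x
    using order_trans[OF norm_ge_zero norm_le_orbit_sup, of x] mu_pos by simp
  fix x :: 'x assume x: "x \<in> cball 0 r"
  show "1 / mu * norm x \<le> ?V x" "?V x \<le> M / mu * norm x"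
    using norm_le_orbit_sup[of x] orbit_sup_le_on_ball[OF x] mu_pos by (simp_all add: divide_right_mono)
  fix q
  have "\<forall>\<^sub>F h in at_right 0. ?V (sol q h x) \<le> exp (- mu * h) * ?V x"
    using eventually_at_right_less
    by eventually_elim (use orbit_sup_decrease[OF x] mu_pos in \<open>simp add: divide_right_mono\<close>)
  then have "dini_upper sol ?V q x \<le> ereal (- mu * ?V x)"
    by (rule dini_upper_le_of_exp_decrease)
  also have "- mu * ?V x \<le> - norm x"
    using norm_le_orbit_sup[of x] mu_pos by simp
  finally show "dini_upper sol ?V q x \<le> ereal (- norm x)" by simp
qed (use mu_pos M in auto)

end

theorem lemma1:
  fixes T :: "real \<Rightarrow> 'x::banach \<Rightarrow> 'x"
    and f :: "'q \<Rightarrow> 'x \<times> 'u::banach \<Rightarrow> 'x"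
    and K :: "'x \<Rightarrow> 'u"
    and sol :: "'q \<Rightarrow> real \<Rightarrow> 'x \<Rightarrow> 'x"
    and Lf :: real
  assumes "C0_group T"
    and "Lf > 0"
    and "\<And>q. Lf-lipschitz_on UNIV (f q)"
    and "\<And>q. f q (0, 0) = 0"
    and "\<exists>LK. LK-lipschitz_on UNIV K"
    and "K 0 = 0"
    and "is_mild_solution_map T f K sol"
    and "USGES sol"
  shows "\<forall>r>0. \<exists>cl>0. \<exists>cu>0. \<exists>V :: 'x \<Rightarrow> real.
           (\<exists>L. L-lipschitz_on UNIV V) \<and> (\<forall>x. V x \<ge> 0) \<and>
           (\<forall>x\<in>cball 0 r. cl * norm x \<le> V x \<and> V x \<le> cu * norm x) \<and>
           (\<forall>x\<in>cball 0 r. \<forall>q. dini_upper sol V q x \<le> ereal (- norm x))"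
proof (intro allI impI)
  fix r :: real assume r: "r > 0"
  obtain LK where K: "LK-lipschitz_on UNIV K" using assms(5) by blast
  obtain MT w where "MT \<ge> 1" "w \<ge> 0" "\<forall>t x. 0 \<le> t \<longrightarrow> norm (T t x) \<le> MT * exp (w * t) * norm x"
    using C0_group_exp_bound[OF assms(1)] by blast
  then interpret semilinear_system T MT w f K sol Lf LK
    by unfold_locales (use assms K in auto)
  obtain M lam where "M > 0" "lam > 0" and decay: "\<And>ts qs x t. switch_times ts \<Longrightarrow>
      x \<in> cball 0 r \<Longrightarrow> t \<ge> 0 \<Longrightarrow> norm (phi sol ts qs t x) \<le> M * exp (- lam * t) * norm x"
    using assms(8) r unfolding USGES_def by blast
  then interpret switched_flow_bounds sol MT flow_rate r M lam
    using sol_at_0 phi_lipschitz flow_rate_nonneg MT r by unfold_locales auto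
  show "\<exists>cl>0. \<exists>cu>0. \<exists>V :: 'x \<Rightarrow> real.
           (\<exists>L. L-lipschitz_on UNIV V) \<and> (\<forall>x. V x \<ge> 0) \<and>
           (\<forall>x\<in>cball 0 r. cl * norm x \<le> V x \<and> V x \<le> cu * norm x) \<and>
           (\<forall>x\<in>cball 0 r. \<forall>q. dini_upper sol V q x \<le> ereal (- norm x))"
    by (rule converse_lyapunov)
qed

end
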